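(* Let $n\ge2$, $1<p<\infty$, let $\varrho\in\mathbb{R}^n$ be a unit vector and $B_\varrho:=B(0,1)\cap\{x\in\mathbb{R}^n:\varrho\cdot x<0\}$. For $u\in W^{1,p}_0(B(0,1);\mathbb{R}^m)$ let $\bar\delta_{\varrho,\nabla u}$ be the nonnegative Radon measure on the unit sphere $S^{mn-1}\subset\mathbb{R}^{m\times n}$ defined by $$\langle\bar\delta_{\varrho,\nabla u},\phi\rangle=|B_\varrho|^{-1}\int_{B_\varrho\cap\{\nabla u\ne0\}}\phi\Big(\frac{\nabla u(x)}{|\nabla u(x)|}\Big)|\nabla u(x)|^p\,\mathrm{d}x,\qquad\phi\in C(S^{mn-1}).$$ Then the set $H^\varrho:=\{\bar\delta_{\varrho,\nabla u}:u\in W^{1,p}_0(B(0,1);\mathbb{R}^m)\}$ is convex.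
   Context: $B(0,1)$ is the open unit ball of $\mathbb{R}^n$. (In the paper these measures are viewed as measures on the remainder $\beta_{\mathcal S}\mathbb{R}^{m\times n}\setminus\mathbb{R}^{m\times n}$ of the compactification of $\mathbb{R}^{m\times n}$ by the sphere, which is identified with $S^{mn-1}$.) *)

theory Defs
  imports "HOL-Analysis.Analysis"
begin

coinductive smooth_map :: "(real^'n::finite \<Rightarrow> real^'m::finite) \<Rightarrow> bool" where
  "(\<forall>x. f differentiable (at x)) \<Longrightarrow>
   (\<forall>i. smooth_map (\<lambda>x. frechet_derivative f (at x) (axis i 1))) \<Longrightarrow> smooth_map f"

definition jac :: "(real^'n::finite \<Rightarrow> real^'m::finite) \<Rightarrow> real^'n \<Rightarrow> real^'n^'m" where
  "jac f x = matrix (frechet_derivative f (at x))"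

abbreviation B1 :: "(real^'n::finite) set" where "B1 \<equiv> ball 0 1"

text \<open>W0 p u G: u belongs to W_0^{1,p}(B(0,1);R^m) with (weak) gradient G, i.e.
  u, G are in L^p(B(0,1)) and (u,G) is the W^{1,p}-limit of (phi_k, jac phi_k) for
  smooth maps phi_k with compact support contained in B(0,1).\<close>
definition W0 :: "real \<Rightarrow> (real^'n::finite \<Rightarrow> real^'m::finite) \<Rightarrow> (real^'n \<Rightarrow> real^'n^'m) \<Rightarrow> bool" where
  "W0 p u G \<longleftrightarrow>
     u \<in> borel_measurable (lebesgue_on B1) \<and> G \<in> borel_measurable (lebesgue_on B1) \<and>
     set_integrable lebesgue B1 (\<lambda>x. norm (u x) powr p) \<and>
     set_integrable lebesgue B1 (\<lambda>x. norm (G x) powr p) \<and>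
     (\<exists>\<phi> :: nat \<Rightarrow> real^'n \<Rightarrow> real^'m.
        (\<forall>k. smooth_map (\<phi> k) \<and> compact (closure {x. \<phi> k x \<noteq> 0}) \<and>
             closure {x. \<phi> k x \<noteq> 0} \<subseteq> B1) \<and>
        (\<lambda>k. LINT x:B1|lebesgue. norm (\<phi> k x - u x) powr p) \<longlonglongrightarrow> 0 \<and>
        (\<lambda>k. LINT x:B1|lebesgue. norm (jac (\<phi> k) x - G x) powr p) \<longlonglongrightarrow> 0)"

definition Brho :: "real^'n::finite \<Rightarrow> (real^'n) set" where
  "Brho \<rho> = B1 \<inter> {x. \<rho> \<bullet> x < 0}"

text \<open>The measure delta-bar_{rho, grad u} on the unit sphere S^{mn-1} of R^{m x n}
  (Frobenius norm), represented by its action on C(S^{mn-1}); set to 0 on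
  functions that are not continuous on the sphere.\<close>
definition delta_bar :: "real \<Rightarrow> real^'n::finite \<Rightarrow> (real^'n \<Rightarrow> real^'n^'m::finite)
    \<Rightarrow> (real^'n^'m \<Rightarrow> real) \<Rightarrow> real" where
  "delta_bar p \<rho> G \<phi> =
     (if continuous_on (sphere 0 1) \<phi> then
        (1 / measure lebesgue (Brho \<rho>)) *
        (LINT x:(Brho \<rho> \<inter> {x. G x \<noteq> 0})|lebesgue. \<phi> (G x /\<^sub>R norm (G x)) * norm (G x) powr p)
      else 0)"

definition Hrho :: "real \<Rightarrow> real^'n::finite \<Rightarrow> ((real^'n^'m::finite \<Rightarrow> real) \<Rightarrow> real) set" where
  "Hrho p \<rho> = {delta_bar p \<rho> G | G. \<exists>u. W0 p u G}"

end

theory Submission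
  imports Defs
begin

(* Given gradients G1, G2 of maps in W^{1,p}_0 and 0 <= t <= 1, shrink each map into one of two
   disjoint balls B(a_i, r) inside B(0,1) whose centres lie on the hyperplane rho . x = 0 (this is
   where n >= 2 is used), turning the gradient into c_i G_i((x - a_i)/r).  Because rho . a_i = 0, the
   map y |-> a_i + r y carries B_rho onto B(a_i, r) \<inter> B_rho, so by change of variables and
   p-homogeneity of the integrand the new measure is r^n c_i^p times the old one.  Choosing
   r^n c_i^p = t resp. 1 - t and adding the two maps, whose gradients have disjoint supports,
   realises t mu_1 + (1 - t) mu_2.  The sum stays in W^{1,p}_0 because the smooth compactly supported
   approximations can be rescaled and added in the same way. *)

section \<open>Affine change of variables\<close>

lemma lebesgue_affine_density_distr:
  fixes t :: "'a::euclidean_space"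
  assumes "c \<noteq> 0"
  shows "lebesgue = density (distr lebesgue lebesgue (\<lambda>x. t + c *\<^sub>R x)) (\<lambda>_. \<bar>c\<bar> ^ DIM('a))"
    and "(\<lambda>x. t + c *\<^sub>R x) \<in> lebesgue \<rightarrow>\<^sub>M lebesgue"
proof -
  have eq: "(\<lambda>x. t + (\<Sum>j\<in>Basis. (c * (x \<bullet> j)) *\<^sub>R j)) = (\<lambda>x::'a. t + c *\<^sub>R x)"
    unfolding scaleR_scaleR[symmetric] scaleR_sum_right[symmetric] euclidean_representation by simp
  show "lebesgue = density (distr lebesgue lebesgue (\<lambda>x. t + c *\<^sub>R x)) (\<lambda>_. \<bar>c\<bar> ^ DIM('a))"
    using lebesgue_affine_euclidean[of "\<lambda>_. c" t] assms unfolding eq by (simp add: prod_constant)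
  show "(\<lambda>x. t + c *\<^sub>R x) \<in> lebesgue \<rightarrow>\<^sub>M lebesgue"
    using lebesgue_affine_measurable[of "\<lambda>_. c" t] assms unfolding eq by simp
qed

lemma lebesgue_integrable_affine:
  fixes f :: "'a::euclidean_space \<Rightarrow> real"
  assumes f: "integrable lebesgue f" and c: "c \<noteq> 0"
  shows "integrable lebesgue (\<lambda>x. f (t + c *\<^sub>R x))"
proof -
  note affine = lebesgue_affine_density_distr[OF c, of t]
  have "integrable (density (distr lebesgue lebesgue (\<lambda>x. t + c *\<^sub>R x)) (\<lambda>_. \<bar>c\<bar> ^ DIM('a))) f"
    using f affine(1) by simp
  then have "integrable (distr lebesgue lebesgue (\<lambda>x. t + c *\<^sub>R x)) (\<lambda>x. \<bar>c\<bar> ^ DIM('a) *\<^sub>R f x)"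
    using f by (subst (asm) integrable_density) (auto intro: borel_measurable_integrable)
  then have "integrable lebesgue (\<lambda>x. \<bar>c\<bar> ^ DIM('a) *\<^sub>R f (t + c *\<^sub>R x))"
    using affine(2) f by (subst (asm) integrable_distr_eq) (auto simp: borel_measurable_integrable)
  then have "integrable lebesgue (\<lambda>x. (1 / \<bar>c\<bar> ^ DIM('a)) *\<^sub>R (\<bar>c\<bar> ^ DIM('a) *\<^sub>R f (t + c *\<^sub>R x)))"
    by (rule integrable_scaleR_right)
  then show ?thesis using c by simp
qed

lemma lebesgue_integrable_affine_iff:
  fixes f :: "'a::euclidean_space \<Rightarrow> real"
  assumes c: "c \<noteq> 0"
  shows "integrable lebesgue (\<lambda>x. f (t + c *\<^sub>R x)) \<longleftrightarrow> integrable lebesgue f"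
proof
  assume "integrable lebesgue (\<lambda>x. f (t + c *\<^sub>R x))"
  from lebesgue_integrable_affine[OF this, of "1/c" "- t /\<^sub>R c"] c
  show "integrable lebesgue f" by (simp add: algebra_simps)
qed (use lebesgue_integrable_affine c in auto)

lemma lebesgue_integral_affine:
  fixes f :: "'a::euclidean_space \<Rightarrow> real"
  assumes c: "c \<noteq> 0"
  shows "integral\<^sup>L lebesgue f = \<bar>c\<bar> ^ DIM('a) * integral\<^sup>L lebesgue (\<lambda>x. f (t + c *\<^sub>R x))"
proof cases
  assume f: "integrable lebesgue f"
  note affine = lebesgue_affine_density_distr[OF c, of t]
  have "integral\<^sup>L lebesgue f =
      integral\<^sup>L (density (distr lebesgue lebesgue (\<lambda>x. t + c *\<^sub>R x)) (\<lambda>_. \<bar>c\<bar> ^ DIM('a))) f"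
    using affine(1) by simp
  also have "\<dots> = integral\<^sup>L (distr lebesgue lebesgue (\<lambda>x. t + c *\<^sub>R x)) (\<lambda>x. \<bar>c\<bar> ^ DIM('a) *\<^sub>R f x)"
    using f by (subst integral_density) (auto intro: borel_measurable_integrable)
  also have "\<dots> = integral\<^sup>L lebesgue (\<lambda>x. \<bar>c\<bar> ^ DIM('a) *\<^sub>R f (t + c *\<^sub>R x))"
    using affine(2) f by (subst integral_distr) (auto simp: borel_measurable_integrable)
  finally show ?thesis by simp
next
  assume "\<not> integrable lebesgue f" with c show ?thesis
    by (simp add: lebesgue_integrable_affine_iff not_integrable_integral_eq)
qed

lemma mem_affine_image_iff:
  fixes a :: "'a::real_normed_vector"
  assumes "r \<noteq> 0"
  shows "x \<in> (\<lambda>y. a + r *\<^sub>R y) ` S \<longleftrightarrow> (x - a) /\<^sub>R r \<in> S"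
proof
  assume "(x - a) /\<^sub>R r \<in> S"
  moreover have "x = a + r *\<^sub>R ((x - a) /\<^sub>R r)" using assms by simp
  ultimately show "x \<in> (\<lambda>y. a + r *\<^sub>R y) ` S" by blast
qed (use assms in auto)

lemma rescaled_mem_unit_ball_iff:
  fixes a x :: "'a::real_normed_vector"
  assumes "r > 0"
  shows "(x - a) /\<^sub>R r \<in> ball 0 1 \<longleftrightarrow> x \<in> ball a r"
proof -
  have "norm ((x - a) /\<^sub>R r) = norm (x - a) / r" using assms by (simp add: divide_inverse_commute)
  then show ?thesis using assms by (simp add: dist_norm norm_minus_commute divide_less_eq)
qed

lemma affine_image_unit_ball:
  fixes a :: "'a::real_normed_vector"
  assumes "r > 0"
  shows "(\<lambda>y. a + r *\<^sub>R y) ` ball 0 1 = ball a r"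
proof (rule set_eqI)
  fix x
  show "x \<in> (\<lambda>y. a + r *\<^sub>R y) ` ball 0 1 \<longleftrightarrow> x \<in> ball a r"
    using mem_affine_image_iff[of r x a "ball 0 1"] rescaled_mem_unit_ball_iff[OF assms, of x a] assms
    by simp
qed

definition rescale_to_ball :: "'a::real_normed_vector \<Rightarrow> real \<Rightarrow> ('a \<Rightarrow> 'b::zero) \<Rightarrow> 'a \<Rightarrow> 'b" where
  "rescale_to_ball a r f x = (if x \<in> ball a r then f ((x - a) /\<^sub>R r) else 0)"

lemma norm_powr_rescale_to_ball:
  "norm (rescale_to_ball a r f x) powr p = rescale_to_ball a r (\<lambda>y. norm (f y) powr p) x"
  by (simp add: rescale_to_ball_def)

lemma borel_measurable_rescale_to_ball:
  fixes f :: "'a::euclidean_space \<Rightarrow> 'b::euclidean_space"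
  assumes f: "f \<in> borel_measurable (lebesgue_on (ball 0 1))" and r: "r > 0"
  shows "rescale_to_ball a r f \<in> borel_measurable lebesgue"
proof -
  define F where "F x = (if x \<in> ball 0 1 then f x else 0)" for x
  have "F \<in> borel_measurable lebesgue"
    unfolding F_def by (rule borel_measurable_if_I[OF f]) simp
  then have "(\<lambda>x. F ((- a /\<^sub>R r) + (1/r) *\<^sub>R x)) \<in> borel_measurable lebesgue"
    using r by (intro borel_measurable_affine) auto
  moreover have "F ((- a /\<^sub>R r) + (1/r) *\<^sub>R x) = rescale_to_ball a r f x" for x
  proof -
    have "(- a /\<^sub>R r) + (1/r) *\<^sub>R x = (x - a) /\<^sub>R r"
      by (simp add: algebra_simps inverse_eq_divide)
    then show ?thesis
      unfolding F_def rescale_to_ball_def using rescaled_mem_unit_ball_iff[OF r, of x a] by simp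
  qed
  ultimately show ?thesis by simp
qed

lemma
  fixes H :: "'a::euclidean_space \<Rightarrow> real"
  assumes r: "r > 0" and S: "S \<in> sets lebesgue" and S': "S' \<in> sets lebesgue"
    and image: "(\<lambda>y. a + r *\<^sub>R y) ` S = ball a r \<inter> S'"
  shows integrable_rescale_to_ball_iff:
      "integrable (lebesgue_on S') (rescale_to_ball a r H) \<longleftrightarrow> integrable (lebesgue_on S) H"
    and integral_rescale_to_ball:
      "integral\<^sup>L (lebesgue_on S') (rescale_to_ball a r H) = r ^ DIM('a) * integral\<^sup>L (lebesgue_on S) H"
proof -
  define g where "g x = indicator S' x *\<^sub>R rescale_to_ball a r H x" for x
  have g: "g (a + r *\<^sub>R y) = indicator S y *\<^sub>R H y" for y
  proof -
    have "a + r *\<^sub>R y \<in> ball a r \<inter> S' \<longleftrightarrow> (a + r *\<^sub>R y - a) /\<^sub>R r \<in> S"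
      unfolding image[symmetric] using r by (intro mem_affine_image_iff) simp
    then have "a + r *\<^sub>R y \<in> ball a r \<inter> S' \<longleftrightarrow> y \<in> S"
      using r by simp
    then show ?thesis
      using r by (auto simp: g_def rescale_to_ball_def indicator_def)
  qed
  have "integrable (lebesgue_on S') (rescale_to_ball a r H) \<longleftrightarrow> integrable lebesgue g"
    using S' by (simp add: integrable_restrict_space g_def[abs_def])
  also have "\<dots> \<longleftrightarrow> integrable lebesgue (\<lambda>y. g (a + r *\<^sub>R y))"
    using lebesgue_integrable_affine_iff[of r g a] r by simp
  also have "\<dots> \<longleftrightarrow> integrable (lebesgue_on S) H"
    using S by (simp add: g integrable_restrict_space)
  finally show "integrable (lebesgue_on S') (rescale_to_ball a r H) \<longleftrightarrow> integrable (lebesgue_on S) H" .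
  have "integral\<^sup>L (lebesgue_on S') (rescale_to_ball a r H) = integral\<^sup>L lebesgue g"
    using S' by (simp add: integral_restrict_space g_def[abs_def])
  also have "\<dots> = r ^ DIM('a) * integral\<^sup>L lebesgue (\<lambda>y. g (a + r *\<^sub>R y))"
    using lebesgue_integral_affine[of r g a] r by simp
  also have "\<dots> = r ^ DIM('a) * integral\<^sup>L (lebesgue_on S) H"
    using S by (simp add: g integral_restrict_space)
  finally show "integral\<^sup>L (lebesgue_on S') (rescale_to_ball a r H) = r ^ DIM('a) * integral\<^sup>L (lebesgue_on S) H" .
qed

lemma affine_image_Brho:
  fixes a :: "real^'n::finite"
  assumes r: "r > 0" and "\<rho> \<bullet> a = 0" and "ball a r \<subseteq> B1"
  shows "(\<lambda>y. a + r *\<^sub>R y) ` Brho \<rho> = ball a r \<inter> Brho \<rho>"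
proof -
  have "\<rho> \<bullet> ((x - a) /\<^sub>R r) = (\<rho> \<bullet> x) / r" for x
    using assms by (simp add: inner_diff_right divide_inverse_commute)
  then have "\<rho> \<bullet> ((x - a) /\<^sub>R r) < 0 \<longleftrightarrow> \<rho> \<bullet> x < 0" for x
    using r by (simp add: divide_less_0_iff)
  moreover have "x \<in> ball a r \<Longrightarrow> x \<in> B1" for x using assms by blast
  ultimately show ?thesis
    unfolding set_eq_iff mem_affine_image_iff[OF less_imp_neq[OF r, symmetric]] Brho_def
    using rescaled_mem_unit_ball_iff[OF r] by blast
qed


section \<open>Smooth maps and test maps\<close>

abbreviation partial_derivative :: "(real^'n::finite \<Rightarrow> real^'m::finite) \<Rightarrow> 'n \<Rightarrow> real^'n \<Rightarrow> real^'m" where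
  "partial_derivative f i \<equiv> (\<lambda>x. frechet_derivative f (at x) (axis i 1))"

lemma smooth_map_differentiable: "smooth_map f \<Longrightarrow> f differentiable (at x)"
  by (auto elim: smooth_map.cases)

lemma smooth_map_partial_derivative: "smooth_map f \<Longrightarrow> smooth_map (partial_derivative f i)"
  by (auto elim: smooth_map.cases)

lemma has_derivative_rescaled:
  fixes f :: "real^'n::finite \<Rightarrow> real^'m::finite"
  assumes "f differentiable at ((x - a) /\<^sub>R r)"
  shows "((\<lambda>x. c *\<^sub>R f ((x - a) /\<^sub>R r)) has_derivative
           (\<lambda>v. (c / r) *\<^sub>R frechet_derivative f (at ((x - a) /\<^sub>R r)) v)) (at x)"
proof -
  let ?D = "frechet_derivative f (at ((x - a) /\<^sub>R r))"
  have D: "(f has_derivative ?D) (at ((x - a) /\<^sub>R r))"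
    using assms frechet_derivative_works by blast
  have "((\<lambda>x. (x - a) /\<^sub>R r) has_derivative (\<lambda>v. v /\<^sub>R r)) (at x)"
    by (auto intro!: derivative_eq_intros)
  from has_derivative_scaleR_right[OF has_derivative_compose[OF this D], of c]
  have "((\<lambda>x. c *\<^sub>R f ((x - a) /\<^sub>R r)) has_derivative (\<lambda>v. c *\<^sub>R ?D (v /\<^sub>R r))) (at x)" .
  moreover have "c *\<^sub>R ?D (v /\<^sub>R r) = (c / r) *\<^sub>R ?D v" for v
    using linear_cmul[OF has_derivative_linear[OF D]] by (simp add: divide_inverse_commute)
  ultimately show ?thesis by simp
qed

lemma frechet_derivative_rescaled:
  fixes f :: "real^'n::finite \<Rightarrow> real^'m::finite"
  assumes "smooth_map f"
  shows "frechet_derivative (\<lambda>x. c *\<^sub>R f ((x - a) /\<^sub>R r)) (at x) =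
           (\<lambda>v. (c / r) *\<^sub>R frechet_derivative f (at ((x - a) /\<^sub>R r)) v)"
  by (intro frechet_derivative_at[symmetric] has_derivative_rescaled smooth_map_differentiable[OF assms])

lemma smooth_map_rescaled:
  fixes f :: "real^'n::finite \<Rightarrow> real^'m::finite"
  assumes "smooth_map f"
  shows "smooth_map (\<lambda>x. c *\<^sub>R f ((x - a) /\<^sub>R r))"
proof -
  define X where
    "X g \<longleftrightarrow> (\<exists>f c. smooth_map f \<and> g = (\<lambda>x::real^'n. c *\<^sub>R f ((x - a) /\<^sub>R r) :: real^'m))" for g
  have "X (\<lambda>x. c *\<^sub>R f ((x - a) /\<^sub>R r))" using assms unfolding X_def by blast
  then show ?thesis
  proof (rule smooth_map.coinduct[of X])
    fix g assume "X g"
    then obtain f c where f: "smooth_map f" and g: "g = (\<lambda>x. c *\<^sub>R f ((x - a) /\<^sub>R r))"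
      unfolding X_def by blast
    have "g differentiable at x" for x
      unfolding g using has_derivative_rescaled smooth_map_differentiable[OF f] differentiable_def by blast
    moreover have "X (partial_derivative g i)" for i
      unfolding X_def g frechet_derivative_rescaled[OF f] using smooth_map_partial_derivative[OF f] by blast
    ultimately show "\<exists>f. g = f \<and> (\<forall>x. f differentiable at x) \<and>
        (\<forall>i. X (partial_derivative f i) \<or> smooth_map (partial_derivative f i))"
      by blast
  qed
qed

lemma frechet_derivative_add:
  fixes f g :: "real^'n::finite \<Rightarrow> real^'m::finite"
  assumes "smooth_map f" "smooth_map g"
  shows "frechet_derivative (\<lambda>x. f x + g x) (at x) =
           (\<lambda>v. frechet_derivative f (at x) v + frechet_derivative g (at x) v)"
  using assms by (intro frechet_derivative_at[symmetric] has_derivative_add)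
    (simp_all add: frechet_derivative_works[symmetric] smooth_map_differentiable)

lemma smooth_map_add:
  fixes f g :: "real^'n::finite \<Rightarrow> real^'m::finite"
  assumes "smooth_map f" "smooth_map g"
  shows "smooth_map (\<lambda>x. f x + g x)"
proof -
  define X where
    "X h \<longleftrightarrow> (\<exists>f g. smooth_map f \<and> smooth_map g \<and> h = (\<lambda>x::real^'n. f x + g x :: real^'m))" for h
  have "X (\<lambda>x. f x + g x)" using assms unfolding X_def by blast
  then show ?thesis
  proof (rule smooth_map.coinduct[of X])
    fix h assume "X h"
    then obtain f g where f: "smooth_map f" and g: "smooth_map g" and h: "h = (\<lambda>x. f x + g x)"
      unfolding X_def by blast
    have "h differentiable at x" for x
      unfolding h using f g by (intro differentiable_add smooth_map_differentiable)
    moreover have "X (partial_derivative h i)" for i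
      unfolding X_def h frechet_derivative_add[OF f g]
      using smooth_map_partial_derivative f g by blast
    ultimately show "\<exists>f. h = f \<and> (\<forall>x. f differentiable at x) \<and>
        (\<forall>i. X (partial_derivative f i) \<or> smooth_map (partial_derivative f i))"
      by blast
  qed
qed

lemma jac_rescaled:
  fixes f :: "real^'n::finite \<Rightarrow> real^'m::finite"
  assumes "smooth_map f"
  shows "jac (\<lambda>x. c *\<^sub>R f ((x - a) /\<^sub>R r)) x = (c / r) *\<^sub>R jac f ((x - a) /\<^sub>R r)"
  unfolding jac_def frechet_derivative_rescaled[OF assms] by (simp add: matrix_def vec_eq_iff)

lemma jac_add:
  fixes f g :: "real^'n::finite \<Rightarrow> real^'m::finite"
  assumes "smooth_map f" "smooth_map g"
  shows "jac (\<lambda>x. f x + g x) x = jac f x + jac g x"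
  unfolding jac_def frechet_derivative_add[OF assms] by (simp add: matrix_def vec_eq_iff)

lemma smooth_map_continuous:
  fixes f :: "real^'n::finite \<Rightarrow> real^'m::finite"
  assumes "smooth_map f" shows "continuous_on UNIV f"
  using smooth_map_differentiable[OF assms]
  by (meson continuous_at_imp_continuous_on differentiable_imp_continuous_within)

lemma continuous_jac:
  fixes f :: "real^'n::finite \<Rightarrow> real^'m::finite"
  assumes "smooth_map f" shows "continuous_on UNIV (jac f)"
proof -
  have "jac f = (\<lambda>x. \<chi> i j. partial_derivative f j x $ i)"
    unfolding jac_def matrix_def by simp
  then show ?thesis
    using smooth_map_continuous[OF smooth_map_partial_derivative[OF assms]]
    by (auto intro!: continuous_on_vec_lambda continuous_intros)
qed


(* W0 also demands a compact support; this is automatic, see test_map_compact_support. *)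
definition test_map :: "(real^'n::finite \<Rightarrow> real^'m::finite) \<Rightarrow> bool" where
  "test_map \<phi> \<longleftrightarrow> smooth_map \<phi> \<and> closure {x. \<phi> x \<noteq> 0} \<subseteq> B1"

lemma test_map_compact_support:
  "test_map \<phi> \<Longrightarrow> compact (closure {x. \<phi> x \<noteq> 0})"
  using bounded_subset[OF bounded_ball, of "closure {x. \<phi> x \<noteq> 0}" 0 1]
  unfolding test_map_def compact_eq_bounded_closed by simp

lemma test_map_vanishes_outside:
  fixes \<phi> :: "real^'n::finite \<Rightarrow> real^'m::finite"
  assumes "test_map \<phi>" and "y \<notin> B1"
  shows "\<phi> y = 0" and "jac \<phi> y = 0"
proof -
  let ?S = "- closure {x. \<phi> x \<noteq> 0}"
  have y: "y \<in> ?S" using assms unfolding test_map_def by blast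
  have zero: "\<phi> x = 0" if "x \<in> ?S" for x
    using that closure_subset[of "{x. \<phi> x \<noteq> 0}"] by blast
  then show "\<phi> y = 0" using y .
  have "((\<lambda>_. 0) has_derivative (\<lambda>_. 0)) (at y)" by simp
  then have "(\<phi> has_derivative (\<lambda>_. 0)) (at y)"
  proof (rule has_derivative_transform_within_open)
    show "open ?S" by (rule open_Compl) simp
    show "y \<in> ?S" by (rule y)
    show "0 = \<phi> x" if "x \<in> ?S" for x using zero[OF that] by simp
  qed
  then have "frechet_derivative \<phi> (at y) = (\<lambda>_. 0)" by (rule frechet_derivative_at[symmetric])
  then show "jac \<phi> y = 0" unfolding jac_def by (simp add: matrix_def vec_eq_iff)
qed

lemma test_map_add:
  assumes "test_map \<phi>" "test_map \<psi>"
  shows "test_map (\<lambda>x. \<phi> x + \<psi> x)"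
proof -
  have "{x. \<phi> x + \<psi> x \<noteq> 0} \<subseteq> {x. \<phi> x \<noteq> 0} \<union> {x. \<psi> x \<noteq> 0}" by auto
  then have "closure {x. \<phi> x + \<psi> x \<noteq> 0} \<subseteq> closure {x. \<phi> x \<noteq> 0} \<union> closure {x. \<psi> x \<noteq> 0}"
    unfolding closure_Un[symmetric] by (rule closure_mono)
  moreover have "smooth_map (\<lambda>x. \<phi> x + \<psi> x)"
    using assms by (intro smooth_map_add) (simp_all add: test_map_def)
  ultimately show ?thesis using assms by (auto simp: test_map_def)
qed

lemma test_map_rescaled:
  fixes \<phi> :: "real^'n::finite \<Rightarrow> real^'m::finite"
  assumes \<phi>: "test_map \<phi>" and r: "r > 0" and sub: "ball a r \<subseteq> B1"
  shows "test_map (\<lambda>x. c *\<^sub>R \<phi> ((x - a) /\<^sub>R r))"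
proof -
  let ?K = "closure {x. \<phi> x \<noteq> 0}"
  let ?T = "\<lambda>y. a + r *\<^sub>R y"
  have "compact (?T ` ?K)"
    by (intro compact_continuous_image test_map_compact_support[OF \<phi>] continuous_intros)
  moreover have "{x. c *\<^sub>R \<phi> ((x - a) /\<^sub>R r) \<noteq> 0} \<subseteq> ?T ` ?K"
  proof
    fix x assume "x \<in> {x. c *\<^sub>R \<phi> ((x - a) /\<^sub>R r) \<noteq> 0}"
    then have "(x - a) /\<^sub>R r \<in> ?K" using closure_subset[of "{x. \<phi> x \<noteq> 0}"] by auto
    then show "x \<in> ?T ` ?K" using r by (simp add: mem_affine_image_iff)
  qed
  ultimately have "closure {x. c *\<^sub>R \<phi> ((x - a) /\<^sub>R r) \<noteq> 0} \<subseteq> ?T ` ?K"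
    by (meson closure_minimal compact_imp_closed)
  also have "\<dots> \<subseteq> ?T ` B1"
    using \<phi> unfolding test_map_def by (intro image_mono) simp
  also have "\<dots> \<subseteq> B1"
    using affine_image_unit_ball[OF r, of a] sub by simp
  moreover have "smooth_map (\<lambda>x. c *\<^sub>R \<phi> ((x - a) /\<^sub>R r))"
    using \<phi> unfolding test_map_def by (intro smooth_map_rescaled) simp
  ultimately show ?thesis unfolding test_map_def by simp
qed


lemma rescaled_test_map_errors:
  fixes \<phi> :: "real^'n::finite \<Rightarrow> real^'m::finite"
  assumes \<phi>: "test_map \<phi>" and r: "r > 0"
  shows "(c * r) *\<^sub>R \<phi> ((x - a) /\<^sub>R r) - rescale_to_ball a r (\<lambda>y. (c * r) *\<^sub>R u y) x =
      rescale_to_ball a r (\<lambda>y. (c * r) *\<^sub>R (\<phi> y - u y)) x"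
    and "jac (\<lambda>x. (c * r) *\<^sub>R \<phi> ((x - a) /\<^sub>R r)) x - rescale_to_ball a r (\<lambda>y. c *\<^sub>R G y) x =
      rescale_to_ball a r (\<lambda>y. c *\<^sub>R (jac \<phi> y - G y)) x"
proof -
  have outside: "\<phi> ((x - a) /\<^sub>R r) = 0" "jac \<phi> ((x - a) /\<^sub>R r) = 0" if "x \<notin> ball a r"
    using test_map_vanishes_outside[OF \<phi>, of "(x - a) /\<^sub>R r"] rescaled_mem_unit_ball_iff[OF r, of x a] that
    by auto
  show "(c * r) *\<^sub>R \<phi> ((x - a) /\<^sub>R r) - rescale_to_ball a r (\<lambda>y. (c * r) *\<^sub>R u y) x =
      rescale_to_ball a r (\<lambda>y. (c * r) *\<^sub>R (\<phi> y - u y)) x"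
    using outside by (simp add: rescale_to_ball_def scaleR_diff_right)
  have jac: "jac (\<lambda>x. (c * r) *\<^sub>R \<phi> ((x - a) /\<^sub>R r)) x = c *\<^sub>R jac \<phi> ((x - a) /\<^sub>R r)"
    using jac_rescaled[where f=\<phi> and c="c * r" and a=a and r=r and x=x] \<phi> r
    by (simp add: test_map_def)
  show "jac (\<lambda>x. (c * r) *\<^sub>R \<phi> ((x - a) /\<^sub>R r)) x - rescale_to_ball a r (\<lambda>y. c *\<^sub>R G y) x =
      rescale_to_ball a r (\<lambda>y. c *\<^sub>R (jac \<phi> y - G y)) x"
    unfolding jac using outside(2) by (simp add: rescale_to_ball_def scaleR_diff_right)
qed

section \<open>Closure properties of W0\<close>

lemma norm_add_powr_le:
  fixes a b :: "'b::real_normed_vector"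
  assumes p: "0 \<le> p"
  shows "norm (a + b) powr p \<le> 2 powr p * (norm a powr p + norm b powr p)"
proof -
  define m where "m = max (norm a) (norm b)"
  have "norm (a + b) powr p \<le> (2 * m) powr p"
    unfolding m_def using norm_triangle_ineq[of a b] p by (intro powr_mono2) auto
  also have "\<dots> = 2 powr p * m powr p" using m_def by (simp add: powr_mult)
  also have "m powr p \<le> norm a powr p + norm b powr p"
    unfolding m_def by (cases "norm a \<le> norm b") (auto simp: max_def)
  finally show ?thesis by simp
qed

lemma integrable_norm_powr_add:
  fixes f g :: "'a \<Rightarrow> 'b::{banach, second_countable_topology}"
  assumes "f \<in> borel_measurable M" "g \<in> borel_measurable M"
    and "integrable M (\<lambda>x. norm (f x) powr p)" "integrable M (\<lambda>x. norm (g x) powr p)"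
    and p: "0 \<le> p"
  shows "integrable M (\<lambda>x. norm (f x + g x) powr p)"
proof (rule Bochner_Integration.integrable_bound)
  show "integrable M (\<lambda>x. 2 powr p * (norm (f x) powr p + norm (g x) powr p))"
    using assms by auto
  show "(\<lambda>x. norm (f x + g x) powr p) \<in> borel_measurable M"
    using assms by measurable
  show "AE x in M. norm (norm (f x + g x) powr p) \<le> norm (2 powr p * (norm (f x) powr p + norm (g x) powr p))"
    using norm_add_powr_le[OF p] by (intro AE_I2) simp
qed

lemma integrable_norm_powr_continuous:
  fixes f :: "'a::euclidean_space \<Rightarrow> 'b::euclidean_space"
  assumes f: "continuous_on (closure S) f" and S: "bounded S" "S \<in> sets lebesgue" and p: "0 \<le> p"
  shows "integrable (lebesgue_on S) (\<lambda>x. norm (f x) powr p)"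
proof -
  have "compact (f ` closure S)"
    using S f by (intro compact_continuous_image) (auto simp: compact_eq_bounded_closed)
  then obtain M where M: "\<And>x. x \<in> S \<Longrightarrow> norm (f x) \<le> M"
    using closure_subset by (fastforce dest: compact_imp_bounded simp: bounded_iff)
  interpret finite_measure "lebesgue_on S"
    using S by (intro finite_measure_lebesgue_on bounded_set_imp_lmeasurable)
  have fm: "f \<in> borel_measurable (lebesgue_on S)"
    by (intro continuous_imp_measurable_on_sets_lebesgue continuous_on_subset[OF f closure_subset] S(2))
  show ?thesis
  proof (rule Bochner_Integration.integrable_bound)
    show "integrable (lebesgue_on S) (\<lambda>_. M powr p)" by simp
    show "(\<lambda>x. norm (f x) powr p) \<in> borel_measurable (lebesgue_on S)" using fm by measurable
    have "norm (f x) powr p \<le> M powr p" if "x \<in> S" for x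
      using M[OF that] p by (intro powr_mono2) auto
    then show "AE x in lebesgue_on S. norm (norm (f x) powr p) \<le> norm (M powr p)"
      using S by (intro AE_I2) (auto simp: space_restrict_space)
  qed
qed

lemma approximation_error_integrable:
  fixes f u :: "'a::euclidean_space \<Rightarrow> 'b::euclidean_space"
  assumes f: "continuous_on UNIV f" and S: "bounded S" "S \<in> sets lebesgue"
    and u: "u \<in> borel_measurable (lebesgue_on S)" "integrable (lebesgue_on S) (\<lambda>x. norm (u x) powr p)"
    and p: "0 \<le> p"
  shows "(\<lambda>x. f x - u x) \<in> borel_measurable (lebesgue_on S)"
    and "integrable (lebesgue_on S) (\<lambda>x. norm (f x - u x) powr p)"
proof -
  have f_on: "continuous_on T f" for T
    using f by (rule continuous_on_subset) simp
  have fm: "f \<in> borel_measurable (lebesgue_on S)"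
    by (rule continuous_imp_measurable_on_sets_lebesgue[OF f_on S(2)])
  have um: "(\<lambda>x. - u x) \<in> borel_measurable (lebesgue_on S)"
    by (rule borel_measurable_uminus[OF u(1)])
  show "(\<lambda>x. f x - u x) \<in> borel_measurable (lebesgue_on S)"
    using borel_measurable_add[OF fm um] by simp
  have "integrable (lebesgue_on S) (\<lambda>x. norm (f x + - u x) powr p)"
    using integrable_norm_powr_add[OF fm um integrable_norm_powr_continuous[OF f_on S p] _ p] u(2)
    by simp
  then show "integrable (lebesgue_on S) (\<lambda>x. norm (f x - u x) powr p)" by simp
qed

lemma tendsto_integral_norm_powr_add:
  fixes f g :: "nat \<Rightarrow> 'a \<Rightarrow> 'b::{banach, second_countable_topology}"
  assumes fm: "\<And>k. f k \<in> borel_measurable M" and gm: "\<And>k. g k \<in> borel_measurable M"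
    and fi: "\<And>k. integrable M (\<lambda>x. norm (f k x) powr p)"
    and gi: "\<And>k. integrable M (\<lambda>x. norm (g k x) powr p)"
    and f0: "(\<lambda>k. \<integral>x. norm (f k x) powr p \<partial>M) \<longlonglongrightarrow> 0"
    and g0: "(\<lambda>k. \<integral>x. norm (g k x) powr p \<partial>M) \<longlonglongrightarrow> 0"
    and p: "0 \<le> p"
  shows "(\<lambda>k. \<integral>x. norm (f k x + g k x) powr p \<partial>M) \<longlonglongrightarrow> 0"
proof (rule tendsto_sandwich[OF _ _ tendsto_const])
  show "\<forall>\<^sub>F k in sequentially. 0 \<le> (\<integral>x. norm (f k x + g k x) powr p \<partial>M)"
    by (intro always_eventually allI integral_nonneg_AE AE_I2) simp
  have "(\<integral>x. norm (f k x + g k x) powr p \<partial>M) \<le>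
      2 powr p * ((\<integral>x. norm (f k x) powr p \<partial>M) + (\<integral>x. norm (g k x) powr p \<partial>M))" for k
  proof -
    have bound: "integrable M (\<lambda>x. 2 powr p * (norm (f k x) powr p + norm (g k x) powr p))"
      using fi gi by (intro integrable_mult_right Bochner_Integration.integrable_add)
    have "(\<integral>x. norm (f k x + g k x) powr p \<partial>M) \<le>
        (\<integral>x. 2 powr p * (norm (f k x) powr p + norm (g k x) powr p) \<partial>M)"
      by (rule integral_mono[OF integrable_norm_powr_add[OF fm gm fi gi p] bound norm_add_powr_le[OF p]])
    also have "\<dots> = 2 powr p * ((\<integral>x. norm (f k x) powr p \<partial>M) + (\<integral>x. norm (g k x) powr p \<partial>M))"
      by (simp only: integral_mult_right_zero Bochner_Integration.integral_add[OF fi gi])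
    finally show ?thesis .
  qed
  then show "\<forall>\<^sub>F k in sequentially. (\<integral>x. norm (f k x + g k x) powr p \<partial>M) \<le>
      2 powr p * ((\<integral>x. norm (f k x) powr p \<partial>M) + (\<integral>x. norm (g k x) powr p \<partial>M))"
    by (intro always_eventually allI)
  show "(\<lambda>k. 2 powr p * ((\<integral>x. norm (f k x) powr p \<partial>M) + (\<integral>x. norm (g k x) powr p \<partial>M))) \<longlonglongrightarrow> 0"
    using tendsto_mult_right_zero[OF tendsto_add_zero[OF f0 g0]] by simp
qed


lemma B1_sets_lebesgue: "(B1 :: (real^'n::finite) set) \<in> sets lebesgue"
  by simp

lemma W0_iff:
  "W0 p u G \<longleftrightarrow>
     u \<in> borel_measurable (lebesgue_on B1) \<and> G \<in> borel_measurable (lebesgue_on B1) \<and>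
     integrable (lebesgue_on B1) (\<lambda>x. norm (u x) powr p) \<and>
     integrable (lebesgue_on B1) (\<lambda>x. norm (G x) powr p) \<and>
     (\<exists>\<phi>. (\<forall>k. test_map (\<phi> k)) \<and>
        (\<lambda>k. \<integral>x. norm (\<phi> k x - u x) powr p \<partial>lebesgue_on B1) \<longlonglongrightarrow> 0 \<and>
        (\<lambda>k. \<integral>x. norm (jac (\<phi> k) x - G x) powr p \<partial>lebesgue_on B1) \<longlonglongrightarrow> 0)"
proof -
  have test_map_iff: "test_map \<phi> \<longleftrightarrow> smooth_map \<phi> \<and> compact (closure {x. \<phi> x \<noteq> 0}) \<and> closure {x. \<phi> x \<noteq> 0} \<subseteq> B1"
    for \<phi> :: "real^'n::finite \<Rightarrow> real^'m::finite"
    using test_map_compact_support[of \<phi>] by (auto simp: test_map_def)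
  have B1: "B1 \<inter> space lebesgue \<in> sets lebesgue" by simp
  show ?thesis
    unfolding W0_def set_integrable_def set_lebesgue_integral_def test_map_iff
      integrable_restrict_space[OF B1] integral_restrict_space[OF B1] ..
qed

lemma W0_rescale_to_ball:
  fixes u :: "real^'n::finite \<Rightarrow> real^'m::finite"
  assumes W: "W0 p u G" and r: "r > 0" and sub: "ball a r \<subseteq> B1"
  shows "W0 p (rescale_to_ball a r (\<lambda>y. (c * r) *\<^sub>R u y)) (rescale_to_ball a r (\<lambda>y. c *\<^sub>R G y))"
proof -
  obtain \<phi> where um: "u \<in> borel_measurable (lebesgue_on B1)" and Gm: "G \<in> borel_measurable (lebesgue_on B1)"
    and ui: "integrable (lebesgue_on B1) (\<lambda>x. norm (u x) powr p)"
    and Gi: "integrable (lebesgue_on B1) (\<lambda>x. norm (G x) powr p)"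
    and \<phi>: "\<And>k. test_map (\<phi> k)"
    and \<phi>u: "(\<lambda>k. \<integral>x. norm (\<phi> k x - u x) powr p \<partial>lebesgue_on B1) \<longlonglongrightarrow> 0"
    and \<phi>G: "(\<lambda>k. \<integral>x. norm (jac (\<phi> k) x - G x) powr p \<partial>lebesgue_on B1) \<longlonglongrightarrow> 0"
    using W unfolding W0_iff by blast
  have image: "(\<lambda>y. a + r *\<^sub>R y) ` B1 = ball a r \<inter> B1"
    using affine_image_unit_ball[OF r, of a] sub by blast
  note integrable_iff = integrable_rescale_to_ball_iff[OF r B1_sets_lebesgue B1_sets_lebesgue image]
  note integral_eq = integral_rescale_to_ball[OF r B1_sets_lebesgue B1_sets_lebesgue image]
  show ?thesis unfolding W0_iff
  proof (intro conjI exI[of _ "\<lambda>k x. (c * r) *\<^sub>R \<phi> k ((x - a) /\<^sub>R r)"] allI)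
    have "(\<lambda>y. (c * r) *\<^sub>R u y) \<in> borel_measurable (lebesgue_on B1)"
      using um by (rule borel_measurable_scaleR[OF borel_measurable_const])
    then show "rescale_to_ball a r (\<lambda>y. (c * r) *\<^sub>R u y) \<in> borel_measurable (lebesgue_on B1)"
      by (rule measurable_restrict_space1[OF borel_measurable_rescale_to_ball[OF _ r]])
    have "(\<lambda>y. c *\<^sub>R G y) \<in> borel_measurable (lebesgue_on B1)"
      using Gm by (rule borel_measurable_scaleR[OF borel_measurable_const])
    then show "rescale_to_ball a r (\<lambda>y. c *\<^sub>R G y) \<in> borel_measurable (lebesgue_on B1)"
      by (rule measurable_restrict_space1[OF borel_measurable_rescale_to_ball[OF _ r]])
    show "integrable (lebesgue_on B1) (\<lambda>x. norm (rescale_to_ball a r (\<lambda>y. (c * r) *\<^sub>R u y) x) powr p)"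
      using ui by (simp add: norm_powr_rescale_to_ball integrable_iff powr_mult)
    show "integrable (lebesgue_on B1) (\<lambda>x. norm (rescale_to_ball a r (\<lambda>y. c *\<^sub>R G y) x) powr p)"
      using Gi by (simp add: norm_powr_rescale_to_ball integrable_iff powr_mult)
    show "test_map (\<lambda>x. (c * r) *\<^sub>R \<phi> k ((x - a) /\<^sub>R r))" for k
      by (rule test_map_rescaled[OF \<phi> r sub])
    show "(\<lambda>k. \<integral>x. norm ((c * r) *\<^sub>R \<phi> k ((x - a) /\<^sub>R r) -
        rescale_to_ball a r (\<lambda>y. (c * r) *\<^sub>R u y) x) powr p \<partial>lebesgue_on B1) \<longlonglongrightarrow> 0"
      unfolding rescaled_test_map_errors(1)[OF \<phi> r] norm_powr_rescale_to_ball integral_eq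
      using tendsto_mult_right_zero[OF \<phi>u, of "r ^ CARD('n) * \<bar>c * r\<bar> powr p"]
      by (simp add: powr_mult mult.assoc)
    show "(\<lambda>k. \<integral>x. norm (jac (\<lambda>x. (c * r) *\<^sub>R \<phi> k ((x - a) /\<^sub>R r)) x -
        rescale_to_ball a r (\<lambda>y. c *\<^sub>R G y) x) powr p \<partial>lebesgue_on B1) \<longlonglongrightarrow> 0"
      unfolding rescaled_test_map_errors(2)[OF \<phi> r] norm_powr_rescale_to_ball integral_eq
      using tendsto_mult_right_zero[OF \<phi>G, of "r ^ CARD('n) * \<bar>c\<bar> powr p"]
      by (simp add: powr_mult mult.assoc)
  qed
qed

lemma W0_add:
  fixes u1 u2 :: "real^'n::finite \<Rightarrow> real^'m::finite"
  assumes W1: "W0 p u1 G1" and W2: "W0 p u2 G2" and p: "0 \<le> p"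
  shows "W0 p (\<lambda>x. u1 x + u2 x) (\<lambda>x. G1 x + G2 x)"
proof -
  obtain \<phi>1 where um1: "u1 \<in> borel_measurable (lebesgue_on B1)" and Gm1: "G1 \<in> borel_measurable (lebesgue_on B1)"
    and ui1: "integrable (lebesgue_on B1) (\<lambda>x. norm (u1 x) powr p)"
    and Gi1: "integrable (lebesgue_on B1) (\<lambda>x. norm (G1 x) powr p)"
    and \<phi>1: "\<And>k. test_map (\<phi>1 k)"
    and \<phi>u1: "(\<lambda>k. \<integral>x. norm (\<phi>1 k x - u1 x) powr p \<partial>lebesgue_on B1) \<longlonglongrightarrow> 0"
    and \<phi>G1: "(\<lambda>k. \<integral>x. norm (jac (\<phi>1 k) x - G1 x) powr p \<partial>lebesgue_on B1) \<longlonglongrightarrow> 0"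
    using W1 unfolding W0_iff by blast
  obtain \<phi>2 where um2: "u2 \<in> borel_measurable (lebesgue_on B1)" and Gm2: "G2 \<in> borel_measurable (lebesgue_on B1)"
    and ui2: "integrable (lebesgue_on B1) (\<lambda>x. norm (u2 x) powr p)"
    and Gi2: "integrable (lebesgue_on B1) (\<lambda>x. norm (G2 x) powr p)"
    and \<phi>2: "\<And>k. test_map (\<phi>2 k)"
    and \<phi>u2: "(\<lambda>k. \<integral>x. norm (\<phi>2 k x - u2 x) powr p \<partial>lebesgue_on B1) \<longlonglongrightarrow> 0"
    and \<phi>G2: "(\<lambda>k. \<integral>x. norm (jac (\<phi>2 k) x - G2 x) powr p \<partial>lebesgue_on B1) \<longlonglongrightarrow> 0"
    using W2 unfolding W0_iff by blast
  have smooth: "smooth_map (\<phi>1 k)" "smooth_map (\<phi>2 k)" for k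
    using \<phi>1 \<phi>2 by (auto simp: test_map_def)
  note error = approximation_error_integrable[OF _ bounded_ball B1_sets_lebesgue _ _ p]
  note error_u1 = error[OF smooth_map_continuous[OF smooth(1)] um1 ui1]
    and error_u2 = error[OF smooth_map_continuous[OF smooth(2)] um2 ui2]
    and error_G1 = error[OF continuous_jac[OF smooth(1)] Gm1 Gi1]
    and error_G2 = error[OF continuous_jac[OF smooth(2)] Gm2 Gi2]
  have sum_error: "(\<phi>1 k x + \<phi>2 k x) - (u1 x + u2 x) = (\<phi>1 k x - u1 x) + (\<phi>2 k x - u2 x)"
    "jac (\<lambda>x. \<phi>1 k x + \<phi>2 k x) x - (G1 x + G2 x) = (jac (\<phi>1 k) x - G1 x) + (jac (\<phi>2 k) x - G2 x)" for k x
    by (simp_all add: jac_add[OF smooth] algebra_simps)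
  show ?thesis unfolding W0_iff
  proof (intro conjI exI[of _ "\<lambda>k x. \<phi>1 k x + \<phi>2 k x"] allI)
    show "(\<lambda>x. u1 x + u2 x) \<in> borel_measurable (lebesgue_on B1)" using um1 um2 by measurable
    show "(\<lambda>x. G1 x + G2 x) \<in> borel_measurable (lebesgue_on B1)" using Gm1 Gm2 by measurable
    show "integrable (lebesgue_on B1) (\<lambda>x. norm (u1 x + u2 x) powr p)"
      by (rule integrable_norm_powr_add[OF um1 um2 ui1 ui2 p])
    show "integrable (lebesgue_on B1) (\<lambda>x. norm (G1 x + G2 x) powr p)"
      by (rule integrable_norm_powr_add[OF Gm1 Gm2 Gi1 Gi2 p])
    show "test_map (\<lambda>x. \<phi>1 k x + \<phi>2 k x)" for k
      using test_map_add[OF \<phi>1 \<phi>2] .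
    show "(\<lambda>k. \<integral>x. norm ((\<phi>1 k x + \<phi>2 k x) - (u1 x + u2 x)) powr p \<partial>lebesgue_on B1) \<longlonglongrightarrow> 0"
      unfolding sum_error
      by (rule tendsto_integral_norm_powr_add[OF error_u1(1) error_u2(1) error_u1(2) error_u2(2) \<phi>u1 \<phi>u2 p])
    show "(\<lambda>k. \<integral>x. norm (jac (\<lambda>x. \<phi>1 k x + \<phi>2 k x) x - (G1 x + G2 x)) powr p \<partial>lebesgue_on B1) \<longlonglongrightarrow> 0"
      unfolding sum_error
      by (rule tendsto_integral_norm_powr_add[OF error_G1(1) error_G2(1) error_G1(2) error_G2(2) \<phi>G1 \<phi>G2 p])
  qed
qed


section \<open>The measures delta_bar\<close>

definition delta_integrand :: "(real^'n::finite^'m::finite \<Rightarrow> real) \<Rightarrow> real \<Rightarrow> real^'n^'m \<Rightarrow> real" where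
  "delta_integrand \<phi> p A = (if A = 0 then 0 else \<phi> (A /\<^sub>R norm A) * norm A powr p)"

lemma Brho_sets_lebesgue: "Brho \<rho> \<in> sets lebesgue"
  unfolding Brho_def by (intro sets.Int) (auto intro!: lebesgue_openin)

lemma delta_bar_eq_integral:
  "delta_bar p \<rho> G \<phi> = (if continuous_on (sphere 0 1) \<phi> then
     (\<integral>x. delta_integrand \<phi> p (G x) \<partial>lebesgue_on (Brho \<rho>)) / measure lebesgue (Brho \<rho>) else 0)"
proof -
  have "indicator (Brho \<rho> \<inter> {x. G x \<noteq> 0}) x *\<^sub>R (\<phi> (G x /\<^sub>R norm (G x)) * norm (G x) powr p) =
        indicator (Brho \<rho>) x *\<^sub>R delta_integrand \<phi> p (G x)" for x
    by (simp add: delta_integrand_def indicator_def)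
  then show ?thesis
    unfolding delta_bar_def set_lebesgue_integral_def
    by (simp add: integral_restrict_space Brho_sets_lebesgue)
qed

lemma delta_integrand_0 [simp]: "delta_integrand \<phi> p 0 = 0"
  by (simp add: delta_integrand_def)

lemma delta_integrand_scale:
  assumes "0 \<le> c"
  shows "delta_integrand \<phi> p (c *\<^sub>R A) = c powr p * delta_integrand \<phi> p A"
proof (cases "c = 0 \<or> A = 0")
  case False
  then have "c > 0" "A \<noteq> 0" using assms by auto
  then have normalized: "(c *\<^sub>R A) /\<^sub>R norm (c *\<^sub>R A) = A /\<^sub>R norm A" by simp
  have "delta_integrand \<phi> p (c *\<^sub>R A) = \<phi> (A /\<^sub>R norm A) * norm (c *\<^sub>R A) powr p"
    using \<open>c > 0\<close> \<open>A \<noteq> 0\<close> unfolding delta_integrand_def normalized by simp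
  also have "\<dots> = c powr p * delta_integrand \<phi> p A"
    using \<open>c > 0\<close> \<open>A \<noteq> 0\<close> by (simp add: delta_integrand_def powr_mult)
  finally show ?thesis .
qed auto

lemma delta_integrand_measurable:
  fixes \<phi> :: "real^'n::finite^'m::finite \<Rightarrow> real"
  assumes "continuous_on (sphere 0 1) \<phi>"
  shows "delta_integrand \<phi> p \<in> borel_measurable borel"
proof -
  have "continuous_on (- {0}) (\<lambda>A::real^'n^'m. A /\<^sub>R norm A)"
    by (intro continuous_intros) auto
  then have "continuous_on (- {0}) (\<lambda>A. \<phi> (A /\<^sub>R norm A))"
    by (rule continuous_on_compose2[OF assms]) (auto simp: field_simps split: if_splits)
  then have "continuous_on (- {0}) (\<lambda>A. \<phi> (A /\<^sub>R norm A) * norm A powr p)"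
    by (auto intro!: continuous_intros)
  moreover have "delta_integrand \<phi> p = (\<lambda>A. if A \<in> {0} then 0 else \<phi> (A /\<^sub>R norm A) * norm A powr p)"
    by (auto simp: delta_integrand_def)
  ultimately show ?thesis
    by (simp only:) (rule borel_measurable_continuous_on_if, auto)
qed

lemma delta_integrand_bound:
  assumes "continuous_on (sphere 0 1) \<phi>"
  obtains M where "\<And>A. \<bar>delta_integrand \<phi> p A\<bar> \<le> M * norm A powr p"
proof -
  obtain M where M: "\<And>A. A \<in> sphere 0 1 \<Longrightarrow> \<bar>\<phi> A\<bar> \<le> M"
    using compact_imp_bounded[OF compact_continuous_image[OF assms compact_sphere]]
    by (force simp: bounded_iff)
  have "\<bar>delta_integrand \<phi> p A\<bar> \<le> M * norm A powr p" for A
    using M[of "A /\<^sub>R norm A"]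
    by (cases "A = 0") (simp_all add: delta_integrand_def abs_mult mult_right_mono)
  then show ?thesis by (rule that)
qed

lemma integrable_delta_integrand:
  assumes \<phi>: "continuous_on (sphere 0 1) \<phi>" and W: "W0 p u G"
  shows "integrable (lebesgue_on (Brho \<rho>)) (\<lambda>x. delta_integrand \<phi> p (G x))"
proof -
  obtain M where M: "\<And>A. \<bar>delta_integrand \<phi> p A\<bar> \<le> M * norm A powr p"
    using delta_integrand_bound[OF \<phi>] by blast
  have Gm: "G \<in> borel_measurable (lebesgue_on B1)"
    and Gi: "integrable (lebesgue_on B1) (\<lambda>x. norm (G x) powr p)"
    using W unfolding W0_iff by blast+
  have "integrable (lebesgue_on B1) (\<lambda>x. delta_integrand \<phi> p (G x))"
    by (rule Bochner_Integration.integrable_bound[where f="\<lambda>x. M * norm (G x) powr p"])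
      (use Gi measurable_compose[OF Gm delta_integrand_measurable[OF \<phi>]] M in
        \<open>auto intro: order_trans[OF _ abs_ge_self]\<close>)
  then have "set_integrable lebesgue B1 (\<lambda>x. delta_integrand \<phi> p (G x))"
    by (simp add: set_integrable_def integrable_restrict_space)
  then have "set_integrable lebesgue (Brho \<rho>) (\<lambda>x. delta_integrand \<phi> p (G x))"
    by (rule set_integrable_subset) (auto simp: Brho_sets_lebesgue Brho_def)
  then show ?thesis
    by (simp add: set_integrable_def integrable_restrict_space Brho_sets_lebesgue)
qed

lemma delta_bar_rescale_to_ball:
  fixes G :: "real^'n::finite \<Rightarrow> real^'n^'m::finite"
  assumes c: "0 \<le> c" and r: "r > 0" and a: "\<rho> \<bullet> a = 0" and sub: "ball a r \<subseteq> B1"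
  shows "delta_bar p \<rho> (rescale_to_ball a r (\<lambda>y. c *\<^sub>R G y)) \<phi> =
           r ^ CARD('n) * c powr p * delta_bar p \<rho> G \<phi>"
proof -
  have "delta_integrand \<phi> p (rescale_to_ball a r (\<lambda>y. c *\<^sub>R G y) x) =
      rescale_to_ball a r (\<lambda>y. c powr p * delta_integrand \<phi> p (G y)) x" for x
    by (simp add: rescale_to_ball_def delta_integrand_scale[OF c])
  then show ?thesis
    unfolding delta_bar_eq_integral
    by (simp add: integral_rescale_to_ball[OF r Brho_sets_lebesgue Brho_sets_lebesgue affine_image_Brho[OF r a sub]])
qed

lemma delta_bar_add_disjoint:
  assumes W1: "W0 p u1 G1" and W2: "W0 p u2 G2" and disjoint: "\<And>x. G1 x = 0 \<or> G2 x = 0"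
  shows "delta_bar p \<rho> (\<lambda>x. G1 x + G2 x) \<phi> = delta_bar p \<rho> G1 \<phi> + delta_bar p \<rho> G2 \<phi>"
proof (cases "continuous_on (sphere 0 1) \<phi>")
  case True
  have "delta_integrand \<phi> p (G1 x + G2 x) = delta_integrand \<phi> p (G1 x) + delta_integrand \<phi> p (G2 x)" for x
    using disjoint[of x] by (auto simp: delta_integrand_def)
  then show ?thesis
    unfolding delta_bar_eq_integral
    using integrable_delta_integrand[OF True W1] integrable_delta_integrand[OF True W2]
    by (simp add: add_divide_distrib)
qed (simp add: delta_bar_eq_integral)


lemma exists_unit_orthogonal:
  fixes \<rho> :: "real^'n::finite"
  assumes "CARD('n) \<ge> 2"
  obtains e where "norm e = 1" "\<rho> \<bullet> e = 0"
proof -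
  obtain i j :: 'n where ij: "i \<noteq> j"
    using assms by (metis card_2_iff' card_le_Suc_iff numeral_2_eq_2 obtain_subset_with_card_n)
  have "\<exists>e::real^'n. e \<noteq> 0 \<and> \<rho> \<bullet> e = 0"
  proof (cases "\<rho> $ i = 0")
    case True
    then show ?thesis by (intro exI[of _ "axis i 1"]) (simp add: inner_axis axis_eq_0_iff)
  next
    case False
    let ?e = "(\<rho> $ j) *\<^sub>R axis i 1 - (\<rho> $ i) *\<^sub>R axis j (1::real)"
    have "?e $ j = - \<rho> $ i" using ij by (simp add: axis_def)
    then have "?e \<noteq> 0" using False by (metis neg_equal_0_iff_equal zero_index)
    then show ?thesis by (intro exI[of _ ?e]) (simp add: inner_diff_right inner_axis)
  qed
  then obtain e :: "real^'n" where "e \<noteq> 0" "\<rho> \<bullet> e = 0" by blast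
  then show ?thesis by (intro that[of "e /\<^sub>R norm e"]) simp_all
qed

lemma disjoint_balls_on_hyperplane:
  fixes \<rho> :: "real^'n::finite"
  assumes "CARD('n) \<ge> 2"
  obtains a1 a2 r where "r > 0" "\<rho> \<bullet> a1 = 0" "\<rho> \<bullet> a2 = 0" "ball a1 r \<subseteq> B1" "ball a2 r \<subseteq> B1"
    "ball a1 r \<inter> ball a2 r = {}"
proof -
  obtain e :: "real^'n" where e: "norm e = 1" "\<rho> \<bullet> e = 0"
    using exists_unit_orthogonal[OF assms] by blast
  have "ball ((1/2) *\<^sub>R e) (1/4) \<subseteq> B1" "ball (- (1/2) *\<^sub>R e) (1/4) \<subseteq> B1"
    using e by (simp_all add: ball_subset_ball_iff)
  moreover have "dist ((1/2) *\<^sub>R e) (- (1/2) *\<^sub>R e) = 1"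
    using e by (simp add: dist_norm scaleR_left_distrib[symmetric])
  then have "ball ((1/2) *\<^sub>R e) (1/4) \<inter> ball (- (1/2) *\<^sub>R e) (1/4) = {}"
    by (intro disjoint_ballI) simp
  ultimately show ?thesis
    using e by (intro that[of "1/4" "(1/2) *\<^sub>R e" "- (1/2) *\<^sub>R e"]) simp_all
qed

lemma convex_combination_of_delta_bars:
  fixes G1 G2 :: "real^'n::finite \<Rightarrow> real^'n^'m::finite"
  assumes n: "CARD('n) \<ge> 2" and p: "0 < p" and t: "0 \<le> t" "t \<le> 1"
    and W1: "W0 p u1 G1" and W2: "W0 p u2 G2"
  shows "\<exists>u G. W0 p u G \<and>
           delta_bar p \<rho> G = (\<lambda>\<phi>. t * delta_bar p \<rho> G1 \<phi> + (1 - t) * delta_bar p \<rho> G2 \<phi>)"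
proof -
  obtain a1 a2 r where r: "r > 0" and a: "\<rho> \<bullet> a1 = 0" "\<rho> \<bullet> a2 = 0"
    and sub: "ball a1 r \<subseteq> B1" "ball a2 r \<subseteq> B1" and disjoint: "ball a1 r \<inter> ball a2 r = {}"
    by (rule disjoint_balls_on_hyperplane[OF n])
  \<comment> \<open>rescaling with factor c into a ball of radius r multiplies delta_bar by r^n c^p\<close>
  define c1 where "c1 = (t / r ^ CARD('n)) powr (1 / p)"
  define c2 where "c2 = ((1 - t) / r ^ CARD('n)) powr (1 / p)"
  have c: "0 \<le> c1" "0 \<le> c2" by (simp_all add: c1_def c2_def)
  have weights: "r ^ CARD('n) * c1 powr p = t" "r ^ CARD('n) * c2 powr p = 1 - t"
    using t r p by (simp_all add: c1_def c2_def powr_powr)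
  define H1 where "H1 = rescale_to_ball a1 r (\<lambda>y. c1 *\<^sub>R G1 y)"
  define H2 where "H2 = rescale_to_ball a2 r (\<lambda>y. c2 *\<^sub>R G2 y)"
  have W: "W0 p (rescale_to_ball a1 r (\<lambda>y. (c1 * r) *\<^sub>R u1 y)) H1"
    "W0 p (rescale_to_ball a2 r (\<lambda>y. (c2 * r) *\<^sub>R u2 y)) H2"
    unfolding H1_def H2_def
    by (rule W0_rescale_to_ball[OF W1 r sub(1)], rule W0_rescale_to_ball[OF W2 r sub(2)])
  have disjoint_support: "H1 x = 0 \<or> H2 x = 0" for x
    using disjoint by (auto simp: H1_def H2_def rescale_to_ball_def)
  have "delta_bar p \<rho> (\<lambda>x. H1 x + H2 x) \<phi> = t * delta_bar p \<rho> G1 \<phi> + (1 - t) * delta_bar p \<rho> G2 \<phi>"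
    for \<phi>
  proof -
    have "delta_bar p \<rho> (\<lambda>x. H1 x + H2 x) \<phi> = delta_bar p \<rho> H1 \<phi> + delta_bar p \<rho> H2 \<phi>"
      by (rule delta_bar_add_disjoint[OF W disjoint_support])
    also have "\<dots> = t * delta_bar p \<rho> G1 \<phi> + (1 - t) * delta_bar p \<rho> G2 \<phi>"
      unfolding H1_def H2_def delta_bar_rescale_to_ball[OF c(1) r a(1) sub(1)]
        delta_bar_rescale_to_ball[OF c(2) r a(2) sub(2)] weights by (rule refl)
    finally show ?thesis .
  qed
  moreover have "W0 p (\<lambda>x. rescale_to_ball a1 r (\<lambda>y. (c1 * r) *\<^sub>R u1 y) x +
      rescale_to_ball a2 r (\<lambda>y. (c2 * r) *\<^sub>R u2 y) x) (\<lambda>x. H1 x + H2 x)"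
    using p by (intro W0_add[OF W]) simp
  ultimately show ?thesis by blast
qed

theorem lemma4p1:
  fixes \<rho> :: "real^'n::finite" and p :: real
  assumes "CARD('n) \<ge> 2" and "1 < p" and "norm \<rho> = 1"
  shows "\<forall>\<mu>1 \<in> (Hrho p \<rho> :: ((real^'n^'m::finite \<Rightarrow> real) \<Rightarrow> real) set). \<forall>\<mu>2 \<in> Hrho p \<rho>.
           \<forall>t::real. 0 \<le> t \<and> t \<le> 1 \<longrightarrow> (\<lambda>\<phi>. t * \<mu>1 \<phi> + (1 - t) * \<mu>2 \<phi>) \<in> Hrho p \<rho>"
proof (intro ballI allI impI)
  fix \<mu>1 \<mu>2 :: "(real^'n^'m \<Rightarrow> real) \<Rightarrow> real" and t :: real
  assume "\<mu>1 \<in> Hrho p \<rho>" "\<mu>2 \<in> Hrho p \<rho>" and t: "0 \<le> t \<and> t \<le> 1"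
  then obtain u1 u2 G1 G2 where W1: "W0 p u1 G1" and \<mu>1: "\<mu>1 = delta_bar p \<rho> G1"
    and W2: "W0 p u2 G2" and \<mu>2: "\<mu>2 = delta_bar p \<rho> G2"
    unfolding Hrho_def by blast
  have "\<exists>u G. W0 p u G \<and> delta_bar p \<rho> G = (\<lambda>\<phi>. t * \<mu>1 \<phi> + (1 - t) * \<mu>2 \<phi>)"
    unfolding \<mu>1 \<mu>2 using assms(1,2) t W1 W2 by (intro convex_combination_of_delta_bars) auto
  then show "(\<lambda>\<phi>. t * \<mu>1 \<phi> + (1 - t) * \<mu>2 \<phi>) \<in> Hrho p \<rho>"
    unfolding Hrho_def by (metis (mono_tags, lifting) mem_Collect_eq)
qed

end
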